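(* Let $d\ge2$ and $m\ge1$. For each of the classes $\mathcal{H}_\Box$ and $\mathcal{H}_\Box^-$ on $\mathbb{R}_+^d$, there is a pool of size $m$ whose active label complexity is $m$.
   Context: For $\mathbf a\in\mathbb{R}_+^d$, $h_{\mathbf a}(x)=2\mathbb{I}[\exists i\in[d],\ x[i]\ge a[i]]-1$ and $h^-_{\mathbf a}=-h_{\mathbf a}$; $\mathcal{H}_\Box=\{h_{\mathbf a}:\mathbf a\in\mathbb{R}_+^d\}$, $\mathcal{H}_\Box^-=\{h^-_{\mathbf a}:\mathbf a\in\mathbb{R}_+^d\}$. The active label complexity of a finite unlabeled pool with respect to a class $\mathcal{H}$ is the minimum, over algorithms that sequentially query labels of pool points and, for every labeling of the pool consistent with some $h\in\mathcal{H}$, output (with probability 1) a hypothesis with zero error on the pool, of the worst-case total number of label queries. *)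

theory Defs
  imports "HOL-Analysis.Analysis"
begin

definition nonneg_orthant :: "(real^'d) set" where
  "nonneg_orthant = {x. \<forall>i. x $ i \<ge> 0}"

definition box_hyp :: "real^'d \<Rightarrow> real^'d \<Rightarrow> int" where
  "box_hyp a x = 2 * (if \<exists>i. x $ i \<ge> a $ i then 1 else 0) - 1"

definition H_box :: "(real^'d \<Rightarrow> int) set" where
  "H_box = {box_hyp a | a. a \<in> nonneg_orthant}"

definition H_box_neg :: "(real^'d \<Rightarrow> int) set" where
  "H_box_neg = {(\<lambda>x. - box_hyp a x) | a. a \<in> nonneg_orthant}"

text \<open>A (deterministic, adaptive) active learning algorithm as a decision tree:
  either output a hypothesis, or query the label of a point and continue
  in the first subtree if the label is +1, in the second otherwise.\<close>

datatype 'x qtree = Output "'x \<Rightarrow> int" | Query 'x "'x qtree" "'x qtree"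

fun run :: "'x qtree \<Rightarrow> ('x \<Rightarrow> int) \<Rightarrow> ('x \<Rightarrow> int) \<times> nat" where
  "run (Output h) y = (h, 0)"
| "run (Query x t1 t2) y =
     (let (h, n) = (if y x = 1 then run t1 y else run t2 y) in (h, Suc n))"

fun queries_in :: "'x set \<Rightarrow> 'x qtree \<Rightarrow> bool" where
  "queries_in P (Output h) = True"
| "queries_in P (Query x t1 t2) = (x \<in> P \<and> queries_in P t1 \<and> queries_in P t2)"

definition solves :: "'x set \<Rightarrow> ('x \<Rightarrow> int) set \<Rightarrow> 'x qtree \<Rightarrow> bool" where
  "solves P H t \<longleftrightarrow> queries_in P t \<and> (\<forall>h\<in>H. \<forall>x\<in>P. fst (run t h) x = h x)"

definition active_label_complexity :: "'x set \<Rightarrow> ('x \<Rightarrow> int) set \<Rightarrow> nat" where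
  "active_label_complexity P H =
     (LEAST n. \<exists>t. solves P H t \<and> (\<forall>h\<in>H. snd (run t h) \<le> n))"

end

theory Submission
  imports Defs
begin

text \<open>Every pool point must be queried: a run that leaves a point z of the pool unqueried
  cannot distinguish a labeling from the one differing from it only at z. For boxes, a pool
  whose points pairwise exceed each other by at least 1 in some coordinate has this property,
  witnessed by the all-positive labeling and the thresholds a = z + 1/2, which single out z;
  the antidiagonal k e_i + (m - k) e_j, 0 \<le> k < m, is such a pool. The complement class
  inherits the argument by negating all labels.\<close>

fun queried_along :: "'x qtree \<Rightarrow> ('x \<Rightarrow> int) \<Rightarrow> 'x set" where
  "queried_along (Output h) y = {}"
| "queried_along (Query x t1 t2) y =
     insert x (if y x = 1 then queried_along t1 y else queried_along t2 y)"

lemma finite_queried_along: "finite (queried_along t y)"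
  by (induction t) auto

lemma card_queried_along_le: "card (queried_along t y) \<le> snd (run t y)"
proof (induction t)
  case (Query x t1 t2)
  then show ?case
    by (auto simp: card_insert_if finite_queried_along split: prod.splits)
qed simp

lemma queried_along_subset: "queries_in P t \<Longrightarrow> queried_along t y \<subseteq> P"
  by (induction t) auto

lemma run_cong_queried_along:
  "(\<And>x. x \<in> queried_along t y \<Longrightarrow> y' x = y x) \<Longrightarrow> run t y' = run t y"
  by (induction t) (auto split: prod.splits)

fun query_all :: "'x list \<Rightarrow> ('x \<Rightarrow> int) \<Rightarrow> 'x qtree" where
  "query_all [] g = Output g"
| "query_all (x # xs) g = Query x (query_all xs (g(x := 1))) (query_all xs (g(x := -1)))"

lemma run_query_all:
  "run (query_all xs g) y =
     ((\<lambda>z. if z \<in> set xs then (if y z = 1 then 1 else -1) else g z), length xs)"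
  by (induction xs arbitrary: g) (auto simp: fun_eq_iff split: prod.splits)

lemma queries_in_query_all: "set xs \<subseteq> P \<Longrightarrow> queries_in P (query_all xs g)"
  by (induction xs arbitrary: g) auto

definition isolates :: "'x set \<Rightarrow> ('x \<Rightarrow> int) set \<Rightarrow> bool" where
  "isolates P H \<longleftrightarrow>
     (\<exists>y\<in>H. \<forall>z\<in>P. \<exists>h\<in>H. h z \<noteq> y z \<and> (\<forall>x\<in>P - {z}. h x = y x))"

lemma solves_query_all:
  assumes "set xs = P" and "\<forall>h\<in>H. \<forall>x\<in>P. h x \<in> {1, -1}"
  shows "solves P H (query_all xs g)"
  using assms by (fastforce simp: solves_def queries_in_query_all run_query_all)

lemma card_le_queries_if_isolates:
  assumes "finite P" "isolates P H" "solves P H t"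
  obtains h where "h \<in> H" "card P \<le> snd (run t h)"
proof -
  from assms(2) obtain y where y: "y \<in> H"
    and flip: "\<And>z. z \<in> P \<Longrightarrow> \<exists>h\<in>H. h z \<noteq> y z \<and> (\<forall>x\<in>P - {z}. h x = y x)"
    unfolding isolates_def by blast
  have Q: "queried_along t y \<subseteq> P"
    using assms(3) queried_along_subset by (auto simp: solves_def)
  have "card P \<le> snd (run t y)"
  proof (rule ccontr)
    assume "\<not> ?thesis"
    then have "card (queried_along t y) < card P"
      using card_queried_along_le[of t y] by linarith
    then have "\<not> P \<subseteq> queried_along t y"
      using card_mono[OF finite_queried_along] by (meson not_le)
    then obtain z where z: "z \<in> P" "z \<notin> queried_along t y" by blast
    obtain h where h: "h \<in> H" "h z \<noteq> y z" "\<forall>x\<in>P - {z}. h x = y x"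
      using flip[OF z(1)] by blast
    have "run t h = run t y"
      using h(3) Q z(2) by (intro run_cong_queried_along) auto
    moreover have "fst (run t h) z = h z" "fst (run t y) z = y z"
      using assms(3) h(1) y z(1) by (auto simp: solves_def)
    ultimately show False using h(2) by simp
  qed
  with y that show ?thesis by blast
qed

lemma active_label_complexity_eq_card:
  assumes "finite P" "isolates P H" "\<forall>h\<in>H. \<forall>x\<in>P. h x \<in> {1, -1}"
  shows "active_label_complexity P H = card P"
  unfolding active_label_complexity_def
proof (rule Least_equality)
  obtain xs where xs: "set xs = P" "distinct xs"
    using assms(1) finite_distinct_list by blast
  then have "length xs = card P" by (metis distinct_card)
  then have "\<forall>h\<in>H. snd (run (query_all xs g) h) \<le> card P" for g
    by (simp add: run_query_all)
  then show "\<exists>t. solves P H t \<and> (\<forall>h\<in>H. snd (run t h) \<le> card P)"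
    using solves_query_all[OF xs(1) assms(3)] by blast
next
  fix n assume "\<exists>t. solves P H t \<and> (\<forall>h\<in>H. snd (run t h) \<le> n)"
  then show "card P \<le> n"
    by (metis assms(1,2) card_le_queries_if_isolates le_trans)
qed

lemma isolates_image_uminus:
  "isolates P H \<Longrightarrow> isolates P ((\<lambda>h x. - h x) ` H)"
  unfolding isolates_def by (fastforce simp: image_iff)

lemma box_hyp_iff: "box_hyp a x = 1 \<longleftrightarrow> (\<exists>i. a $ i \<le> x $ i)"
  by (simp add: box_hyp_def)

lemma box_hyp_values: "box_hyp a x \<in> {1, -1}"
  by (simp add: box_hyp_def)

lemma H_box_neg_eq: "H_box_neg = (\<lambda>h x. - h x) ` H_box"
  by (auto simp: H_box_neg_def H_box_def)

definition unit_separated :: "(real^'d) set \<Rightarrow> bool" where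
  "unit_separated P \<longleftrightarrow> (\<forall>x\<in>P. \<forall>z\<in>P. x \<noteq> z \<longrightarrow> (\<exists>i. z $ i + 1 \<le> x $ i))"

lemma isolates_H_box:
  assumes "P \<subseteq> nonneg_orthant" and "unit_separated P"
  shows "isolates P H_box"
  unfolding isolates_def
proof (rule bexI[of _ "box_hyp 0"], rule ballI)
  show "box_hyp 0 \<in> H_box"
    by (auto simp: H_box_def nonneg_orthant_def)
  fix z assume z: "z \<in> P"
  define a where "a = (\<chi> i. z $ i + 1/2)"
  have "a \<in> nonneg_orthant"
    using z assms(1) by (auto simp: a_def nonneg_orthant_def add_nonneg_pos)
  then have "box_hyp a \<in> H_box" by (auto simp: H_box_def)
  moreover have "box_hyp a z \<noteq> box_hyp 0 z"
    using z assms(1) by (auto simp: box_hyp_def a_def nonneg_orthant_def)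
  moreover have "box_hyp a x = box_hyp 0 x" if x: "x \<in> P - {z}" for x
  proof -
    obtain i where "z $ i + 1 \<le> x $ i" using assms(2) x z by (auto simp: unit_separated_def)
    then have "a $ i \<le> x $ i" by (simp add: a_def)
    then have "box_hyp a x = 1" by (auto simp: box_hyp_iff)
    moreover have "box_hyp 0 x = 1"
      using x assms(1) by (auto simp: box_hyp_iff nonneg_orthant_def)
    ultimately show ?thesis by simp
  qed
  ultimately show "\<exists>h\<in>H_box. h z \<noteq> box_hyp 0 z \<and> (\<forall>x\<in>P - {z}. h x = box_hyp 0 x)"
    by blast
qed

definition antidiagonal_point :: "'d \<Rightarrow> 'd \<Rightarrow> nat \<Rightarrow> nat \<Rightarrow> real^'d" where
  "antidiagonal_point i j m k = (\<chi> l. if l = i then real k else if l = j then real (m - k) else 0)"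

definition antidiagonal_pool :: "'d \<Rightarrow> 'd \<Rightarrow> nat \<Rightarrow> (real^'d) set" where
  "antidiagonal_pool i j m = antidiagonal_point i j m ` {..<m}"

lemma antidiagonal_point_nth:
  "i \<noteq> j \<Longrightarrow> antidiagonal_point i j m k $ i = real k"
  "i \<noteq> j \<Longrightarrow> antidiagonal_point i j m k $ j = real (m - k)"
  by (simp_all add: antidiagonal_point_def)

lemma finite_antidiagonal_pool: "finite (antidiagonal_pool i j m)"
  by (simp add: antidiagonal_pool_def)

lemma card_antidiagonal_pool:
  assumes "i \<noteq> j"
  shows "card (antidiagonal_pool i j m) = m"
proof -
  have "inj (antidiagonal_point i j m)"
    by (rule injI) (metis antidiagonal_point_nth(1)[OF assms] of_nat_eq_iff)
  then show ?thesis
    by (simp add: antidiagonal_pool_def card_image inj_on_subset)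
qed

lemma antidiagonal_pool_subset_nonneg_orthant: "antidiagonal_pool i j m \<subseteq> nonneg_orthant"
  by (auto simp: antidiagonal_pool_def antidiagonal_point_def nonneg_orthant_def)

lemma unit_separated_antidiagonal_pool:
  assumes "i \<noteq> j"
  shows "unit_separated (antidiagonal_pool i j m)"
  unfolding unit_separated_def
proof (intro ballI impI)
  fix x z assume "x \<in> antidiagonal_pool i j m" "z \<in> antidiagonal_pool i j m" "x \<noteq> z"
  then obtain k k' where k: "x = antidiagonal_point i j m k" "z = antidiagonal_point i j m k'"
    "k < m" "k' < m" "k \<noteq> k'"
    by (auto simp: antidiagonal_pool_def)
  show "\<exists>l. z $ l + 1 \<le> x $ l"
  proof (cases "k' < k")
    case True
    then have "real k' + 1 \<le> real k" by simp
    then show ?thesis using k assms by (metis antidiagonal_point_nth(1))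
  next
    case False
    then have "real (m - k') + 1 \<le> real (m - k)" using k by linarith
    then show ?thesis using k assms by (metis antidiagonal_point_nth(2))
  qed
qed

theorem corollary2:
  fixes m :: nat
  assumes "CARD('d::finite) \<ge> 2" and "m \<ge> 1"
  shows "(\<exists>P :: (real^'d) set. P \<subseteq> nonneg_orthant \<and> finite P \<and> card P = m
            \<and> active_label_complexity P (H_box :: (real^'d \<Rightarrow> int) set) = m)
       \<and> (\<exists>P :: (real^'d) set. P \<subseteq> nonneg_orthant \<and> finite P \<and> card P = m
            \<and> active_label_complexity P (H_box_neg :: (real^'d \<Rightarrow> int) set) = m)"
proof -
  obtain i j :: 'd where "i \<noteq> j"
    using assms(1) card_le_Suc0_iff_eq[of "UNIV :: 'd set"] by fastforce
  define P where "P = antidiagonal_pool i j m"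
  have pool: "P \<subseteq> nonneg_orthant" "finite P" "card P = m"
    using \<open>i \<noteq> j\<close> by (simp_all add: P_def antidiagonal_pool_subset_nonneg_orthant
        finite_antidiagonal_pool card_antidiagonal_pool)
  have box: "isolates P H_box"
    using pool(1) unit_separated_antidiagonal_pool[OF \<open>i \<noteq> j\<close>]
    by (simp add: P_def isolates_H_box)
  have box_values: "\<forall>h\<in>H_box. \<forall>x\<in>P. h x \<in> {1, -1}"
    unfolding H_box_def using box_hyp_values by blast
  then have "\<forall>h\<in>H_box_neg. \<forall>x\<in>P. h x \<in> {1, -1}"
    by (auto simp: H_box_neg_eq)
  moreover have "isolates P H_box_neg"
    using isolates_image_uminus[OF box] by (simp add: H_box_neg_eq)
  ultimately have "active_label_complexity P H_box = m"
    "active_label_complexity P H_box_neg = m"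
    using active_label_complexity_eq_card[OF pool(2)] box box_values pool(3) by simp_all
  then show ?thesis using pool by blast
qed

end
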